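(* Let $X$ be a set. For every continuous map $f\colon\mathbb{V}([0,1]^X)\to[0,1]$ there exist an at most countable set $Y$, a continuous map $s\colon[0,1]^Y\to[0,1]$ and a family $(h_y\colon[0,1]^X\to[0,1])_{y\in Y}$ of continuous maps such that $f=s\circ\langle\Box\circ\mathbb{V}h_y\rangle_{y\in Y}$.
   Context: $[0,1]^X$ has the product topology. For a compact Hausdorff space $Z$, $\mathbb{V}Z$ is the set of all closed subsets of $Z$ (including $\varnothing$) with the Vietoris topology, generated by $\{K\mid K\subseteq U\}$ and $\{K\mid K\cap U\neq\varnothing\}$ for $U$ open in $Z$; for continuous $h\colon Z\to W$, $\mathbb{V}h(K)=h[K]$. $\Box\colon\mathbb{V}([0,1])\to[0,1]$ is $K\mapsto\inf K$ (with $\inf\varnothing=1$). For a family of maps $(g_y\colon A\to B_y)_{y\in Y}$, $\langle g_y\rangle_{y\in Y}\colon A\to\prod_y B_y$ is the induced map. *)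

theory Defs
  imports "HOL-Analysis.Analysis"
begin

definition vietoris :: "'a topology \<Rightarrow> 'a set topology" where
  "vietoris Z = topology_generated_by
     ({ {K. closedin Z K \<and> K \<subseteq> U} | U. openin Z U }
      \<union> { {K. closedin Z K \<and> K \<inter> U \<noteq> {}} | U. openin Z U })"

definition box :: "real set \<Rightarrow> real" where
  "box K = (if K = {} then 1 else Inf K)"

text \<open>The cube [0,1]^X with the product topology (points are extensional functions on X).\<close>
definition cube :: "'x set \<Rightarrow> ('x \<Rightarrow> real) topology" where
  "cube X = product_topology (\<lambda>_. top_of_set {0..1}) X"

end

theory Submission
  imports Defs
begin

text \<open>Urysohn functions show that the functionals \<open>K \<mapsto> \<Box>(h[K])\<close>, for continuous
  \<open>h : Z \<rightarrow> [0,1]\<close>, generate the Vietoris topology of a compact Hausdorff space \<open>Z\<close>, and the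
  Alexander subbase theorem shows that \<open>\<VV>Z\<close> is compact. On a compact space whose topology is
  generated by a family of real functionals, a continuous \<open>f\<close> is determined up to \<open>\<epsilon>\<close> by
  finitely many of them, so countably many of them determine \<open>f\<close> exactly. Hence \<open>f\<close> factors
  through the induced continuous map into \<open>[0,1]\<^sup>\<nat>\<close>; this map is a quotient map onto its
  compact image, and Tietze's theorem extends the factor to the whole cube.\<close>

lemma topology_generated_by_eq_subbase:
  "topology_generated_by B =
     topology (arbitrary union_of (finite intersection_of (\<lambda>S. S \<in> B) relative_to \<Union>B))"
proof -
  have "generate_topology_on B S \<longleftrightarrow>
          (arbitrary union_of (finite intersection_of (\<lambda>S. S \<in> B) relative_to \<Union>B)) S" for S
  proof
    assume "generate_topology_on B S"
    then show "(arbitrary union_of (finite intersection_of (\<lambda>S. S \<in> B) relative_to \<Union>B)) S"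
    proof induction
      case (Basis s)
      then have "(finite intersection_of (\<lambda>S. S \<in> B) relative_to \<Union>B) (\<Union>B \<inter> s)"
        by (intro relative_to_inc finite_intersection_of_inc)
      moreover have "\<Union>B \<inter> s = s"
        using Basis by blast
      ultimately show ?case
        by (metis arbitrary_union_of_inc)
    next
      case (Int a b)
      then show ?case
        using istopology_subbase unfolding istopology_def by blast
    next
      case (UN K)
      then show ?case
        using istopology_subbase unfolding istopology_def by blast
    qed simp
  next
    assume "(arbitrary union_of (finite intersection_of (\<lambda>S. S \<in> B) relative_to \<Union>B)) S"
    then obtain \<U> where \<U>: "\<U> \<subseteq> Collect (finite intersection_of (\<lambda>S. S \<in> B) relative_to \<Union>B)"
      and S: "\<Union>\<U> = S"
      unfolding union_of_def arbitrary_def by blast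
    have whole: "generate_topology_on B (\<Union>B)"
      using generate_topology_on.UN[OF generate_topology_on.Basis, of B B] by simp
    have "generate_topology_on B u" if "u \<in> \<U>" for u
    proof -
      obtain F where F: "finite F" "F \<subseteq> B" "u = \<Union>B \<inter> \<Inter>F"
        using \<U> \<open>u \<in> \<U>\<close> unfolding relative_to_def intersection_of_def by blast
      show ?thesis
      proof (cases "F = {}")
        case False
        then have "generate_topology_on B (\<Inter>F)"
          using F by (intro generate_topology_on_Inter) (auto intro: generate_topology_on.Basis)
        then show ?thesis
          using F whole generate_topology_on.Int by blast
      qed (use F whole in simp)
    qed
    then show "generate_topology_on B S"
      using S generate_topology_on.UN by blast
  qed
  then show ?thesis
    by metis
qed

subsection \<open>The Vietoris hyperspace\<close>

lemma topspace_vietoris: "topspace (vietoris Z) = {K. closedin Z K}"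
  unfolding vietoris_def topology_generated_by_topspace
  by (auto intro!: exI[of _ "topspace Z"] dest: closedin_subset)

lemma openin_vietoris_subset:
  "openin Z U \<Longrightarrow> openin (vietoris Z) {K. closedin Z K \<and> K \<subseteq> U}"
  unfolding vietoris_def by (rule topology_generated_by_Basis) blast

lemma openin_vietoris_meets:
  "openin Z U \<Longrightarrow> openin (vietoris Z) {K. closedin Z K \<and> K \<inter> U \<noteq> {}}"
  unfolding vietoris_def by (rule topology_generated_by_Basis) blast

lemma vietoris_finite_subcover:
  assumes Z: "compact_space Z" and U: "openin Z U"
    and J: "\<forall>W\<in>J. openin Z W" "topspace Z - \<Union>J \<subseteq> U"
  obtains J' where "finite J'" "J' \<subseteq> J"
    "topspace (vietoris Z) \<subseteq>
       {K. closedin Z K \<and> K \<subseteq> U} \<union> (\<Union>W\<in>J'. {K. closedin Z K \<and> K \<inter> W \<noteq> {}})"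
proof -
  have "compactin Z (topspace Z - U)"
    using Z U by (simp add: closedin_compact_space closedin_diff)
  then have "\<exists>J'. finite J' \<and> J' \<subseteq> J \<and> topspace Z - U \<subseteq> \<Union>J'"
    by (rule compactinD) (use J in auto)
  then obtain J' where J': "finite J'" "J' \<subseteq> J" "topspace Z - U \<subseteq> \<Union>J'"
    by blast
  have cover: "topspace (vietoris Z) \<subseteq>
      {K. closedin Z K \<and> K \<subseteq> U} \<union> (\<Union>W\<in>J'. {K. closedin Z K \<and> K \<inter> W \<noteq> {}})"
  proof
    fix K assume "K \<in> topspace (vietoris Z)"
    then have K: "closedin Z K"
      by (simp add: topspace_vietoris)
    show "K \<in> {K. closedin Z K \<and> K \<subseteq> U} \<union> (\<Union>W\<in>J'. {K. closedin Z K \<and> K \<inter> W \<noteq> {}})"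
    proof (cases "K \<subseteq> U")
      case False
      then obtain x where x: "x \<in> K" "x \<notin> U"
        by blast
      then have "x \<in> topspace Z"
        using K closedin_subset by blast
      then obtain W where "W \<in> J'" "x \<in> W"
        using x J'(3) by blast
      then show ?thesis
        using K x by blast
    qed (use K in blast)
  qed
  show ?thesis
    using J'(1,2) cover by (rule that)
qed

lemma vietoris_subbasic_cover_finite_subcover:
  assumes Z: "compact_space Z"
    and CB: "C \<subseteq> { {K. closedin Z K \<and> K \<subseteq> U} | U. openin Z U }
               \<union> { {K. closedin Z K \<and> K \<inter> U \<noteq> {}} | U. openin Z U }"
    and cov: "topspace (vietoris Z) \<subseteq> \<Union>C"
  shows "\<exists>C'. finite C' \<and> C' \<subseteq> C \<and> topspace (vietoris Z) \<subseteq> \<Union>C'"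
proof -
  define J where "J = {W. openin Z W \<and> {K. closedin Z K \<and> K \<inter> W \<noteq> {}} \<in> C}"
  \<comment> \<open>The closed set missed by every "meets" member of \<open>C\<close> must lie in some "subset" member.\<close>
  define D where "D = topspace Z - \<Union>J"
  have "closedin Z D"
    unfolding D_def J_def by (intro closedin_diff) auto
  then have "D \<in> topspace (vietoris Z)"
    by (simp add: topspace_vietoris)
  then obtain c where "c \<in> C" "D \<in> c"
    using cov by blast
  have "c \<in> { {K. closedin Z K \<and> K \<subseteq> U} | U. openin Z U }
             \<union> { {K. closedin Z K \<and> K \<inter> U \<noteq> {}} | U. openin Z U }"
    using CB \<open>c \<in> C\<close> by (rule subsetD)
  then obtain U where U: "openin Z U"
    "c = {K. closedin Z K \<and> K \<subseteq> U} \<or> c = {K. closedin Z K \<and> K \<inter> U \<noteq> {}}"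
    by auto
  have c: "c = {K. closedin Z K \<and> K \<subseteq> U}"
  proof (rule ccontr)
    assume "c \<noteq> {K. closedin Z K \<and> K \<subseteq> U}"
    then have c: "c = {K. closedin Z K \<and> K \<inter> U \<noteq> {}}"
      using U(2) by blast
    then have "U \<subseteq> \<Union>J"
      using U(1) \<open>c \<in> C\<close> unfolding J_def by blast
    moreover have "D \<inter> U \<noteq> {}"
      using \<open>D \<in> c\<close> c by simp
    ultimately show False
      unfolding D_def by blast
  qed
  have J_open: "\<forall>W\<in>J. openin Z W"
    by (simp add: J_def)
  have J_cover: "topspace Z - \<Union>J \<subseteq> U"
    using \<open>D \<in> c\<close> c unfolding D_def by simp
  obtain J' where J': "finite J'" "J' \<subseteq> J" "topspace (vietoris Z) \<subseteq>
      {K. closedin Z K \<and> K \<subseteq> U} \<union> (\<Union>W\<in>J'. {K. closedin Z K \<and> K \<inter> W \<noteq> {}})"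
    by (rule vietoris_finite_subcover[OF Z U(1) J_open J_cover])
  show ?thesis
  proof (intro exI conjI)
    show "finite (insert c ((\<lambda>W. {K. closedin Z K \<and> K \<inter> W \<noteq> {}}) ` J'))"
      using J' by simp
    show "insert c ((\<lambda>W. {K. closedin Z K \<and> K \<inter> W \<noteq> {}}) ` J') \<subseteq> C"
      using J'(2) \<open>c \<in> C\<close> by (auto simp: J_def)
    show "topspace (vietoris Z) \<subseteq> \<Union>(insert c ((\<lambda>W. {K. closedin Z K \<and> K \<inter> W \<noteq> {}}) ` J'))"
      using J'(3) by (auto simp: c)
  qed
qed

lemma compact_space_vietoris:
  assumes Z: "compact_space Z"
  shows "compact_space (vietoris Z)"
proof -
  define B where "B = { {K. closedin Z K \<and> K \<subseteq> U} | U. openin Z U }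
      \<union> { {K. closedin Z K \<and> K \<inter> U \<noteq> {}} | U. openin Z U }"
  have V: "vietoris Z = topology_generated_by B"
    unfolding vietoris_def B_def ..
  then have UB: "\<Union>B = topspace (vietoris Z)"
    by simp
  show ?thesis
  proof (rule Alexander_subbase_alt[where \<B> = B and U = "topspace (vietoris Z)"])
    show "topology (arbitrary union_of (finite intersection_of (\<lambda>S. S \<in> B)
            relative_to topspace (vietoris Z))) = vietoris Z"
      using topology_generated_by_eq_subbase[of B] by (simp add: V)
  next
    fix C assume "C \<subseteq> B" "topspace (vietoris Z) \<subseteq> \<Union>C"
    then show "\<exists>C'. finite C' \<and> C' \<subseteq> C \<and> topspace (vietoris Z) \<subseteq> \<Union>C'"
      unfolding B_def by (rule vietoris_subbasic_cover_finite_subcover[OF Z])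
  qed (use UB in simp)
qed

context
  fixes Z :: "'a topology" and h :: "'a \<Rightarrow> real"
  assumes Z: "compact_space Z" and h: "continuous_map Z (top_of_set {0..1}) h"
begin

lemma compact_image_closedin:
  assumes "closedin Z K"
  shows "compact (h ` K)" "h ` K \<subseteq> {0..1}"
proof -
  have "compactin (top_of_set {0..1}) (h ` K)"
    using Z h assms closedin_compact_space image_compactin by blast
  then show "compact (h ` K)" "h ` K \<subseteq> {0..1}"
    by (simp_all add: compactin_subtopology)
qed

lemma box_image_le:
  assumes "closedin Z K" "x \<in> K"
  shows "box (h ` K) \<le> h x"
  using assms compact_image_closedin[OF assms(1)] unfolding box_def
  by (auto intro!: cInf_lower bounded_imp_bdd_below compact_imp_bounded)

lemma box_image_attained:
  assumes "closedin Z K" "K \<noteq> {}"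
  obtains x where "x \<in> K" "h x = box (h ` K)"
proof -
  have "box (h ` K) \<in> h ` K"
    using assms compact_image_closedin[OF assms(1)] unfolding box_def
    by (simp add: closed_contains_Inf compact_imp_bounded bounded_imp_bdd_below compact_imp_closed)
  then show ?thesis
    using that by force
qed

lemma box_image_in_unit:
  assumes "closedin Z K"
  shows "box (h ` K) \<in> {0..1}"
proof (cases "K = {}")
  case False
  then obtain x where "x \<in> K" "h x = box (h ` K)"
    using box_image_attained assms by blast
  then show ?thesis
    using compact_image_closedin(2)[OF assms] by force
qed (simp add: box_def)

lemma box_image_gt_iff:
  assumes "closedin Z K" "a < 1"
  shows "a < box (h ` K) \<longleftrightarrow> K \<subseteq> {x \<in> topspace Z. a < h x}"
proof
  assume "a < box (h ` K)"
  then show "K \<subseteq> {x \<in> topspace Z. a < h x}"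
    using assms(1) box_image_le closedin_subset by fastforce
next
  assume K: "K \<subseteq> {x \<in> topspace Z. a < h x}"
  show "a < box (h ` K)"
  proof (cases "K = {}")
    case False
    then show ?thesis
      using box_image_attained[OF assms(1)] K by (metis mem_Collect_eq subsetD)
  qed (simp add: box_def assms(2))
qed

lemma box_image_lt_iff:
  assumes "closedin Z K" "a \<le> 1"
  shows "box (h ` K) < a \<longleftrightarrow> K \<inter> {x \<in> topspace Z. h x < a} \<noteq> {}"
proof
  assume lt: "box (h ` K) < a"
  then have "K \<noteq> {}"
    using assms(2) by (auto simp: box_def)
  then obtain x where "x \<in> K" "h x = box (h ` K)"
    using box_image_attained assms(1) by blast
  then show "K \<inter> {x \<in> topspace Z. h x < a} \<noteq> {}"
    using lt assms(1) closedin_subset by fastforce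
next
  assume "K \<inter> {x \<in> topspace Z. h x < a} \<noteq> {}"
  then show "box (h ` K) < a"
    using box_image_le[OF assms(1)] by force
qed

lemma continuous_map_vietoris_box:
  "continuous_map (vietoris Z) (top_of_set {0..1}) (\<lambda>K. box (h ` K))"
  unfolding continuous_map_upper_lower_semicontinuous_lt_gen
proof (intro conjI allI ballI)
  fix K assume "K \<in> topspace (vietoris Z)"
  then show "box (h ` K) \<in> {0..1}"
    by (metis box_image_in_unit mem_Collect_eq topspace_vietoris)
next
  fix a :: real
  show "openin (vietoris Z) {K \<in> topspace (vietoris Z). a < box (h ` K)}"
  proof (cases "a < 1")
    case True
    have "openin Z {x \<in> topspace Z. a < h x}"
      using h continuous_map_upper_lower_semicontinuous_lt_gen by blast
    moreover have "{K \<in> topspace (vietoris Z). a < box (h ` K)} =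
        {K. closedin Z K \<and> K \<subseteq> {x \<in> topspace Z. a < h x}}"
      unfolding topspace_vietoris using box_image_gt_iff[OF _ True] by blast
    ultimately show ?thesis
      by (simp add: openin_vietoris_subset)
  next
    case False
    then have "{K \<in> topspace (vietoris Z). a < box (h ` K)} = {}"
      using box_image_in_unit by (force simp: topspace_vietoris)
    then show ?thesis
      by (metis openin_empty)
  qed
next
  fix a :: real
  show "openin (vietoris Z) {K \<in> topspace (vietoris Z). box (h ` K) < a}"
  proof (cases "a \<le> 1")
    case True
    have "openin Z {x \<in> topspace Z. h x < a}"
      using h continuous_map_upper_lower_semicontinuous_lt_gen by blast
    moreover have "{K \<in> topspace (vietoris Z). box (h ` K) < a} =
        {K. closedin Z K \<and> K \<inter> {x \<in> topspace Z. h x < a} \<noteq> {}}"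
      unfolding topspace_vietoris using box_image_lt_iff[OF _ True] by blast
    ultimately show ?thesis
      by (simp add: openin_vietoris_meets)
  next
    case False
    then have "{K \<in> topspace (vietoris Z). box (h ` K) < a} = topspace (vietoris Z)"
      using box_image_in_unit by (force simp: topspace_vietoris)
    then show ?thesis
      by (metis openin_topspace)
  qed
qed

end

subsection \<open>Topologies generated by real functionals\<close>

definition weak_nbhd :: "'a topology \<Rightarrow> ('i \<Rightarrow> 'a \<Rightarrow> real) \<Rightarrow> 'i set \<Rightarrow> 'a \<Rightarrow> real \<Rightarrow> 'a set"
  where "weak_nbhd V \<phi> F x \<delta> = {y \<in> topspace V. \<forall>i\<in>F. \<bar>\<phi> i y - \<phi> i x\<bar> < \<delta>}"

definition weak_nbhd_base :: "'a topology \<Rightarrow> 'i set \<Rightarrow> ('i \<Rightarrow> 'a \<Rightarrow> real) \<Rightarrow> bool"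
  where "weak_nbhd_base V I \<phi> \<longleftrightarrow>
    (\<forall>U x. openin V U \<longrightarrow> x \<in> U \<longrightarrow>
       (\<exists>F \<delta>. finite F \<and> F \<subseteq> I \<and> \<delta> > 0 \<and> weak_nbhd V \<phi> F x \<delta> \<subseteq> U))"

lemma weak_nbhd_antimono:
  "F \<subseteq> F' \<Longrightarrow> \<delta>' \<le> \<delta> \<Longrightarrow> weak_nbhd V \<phi> F' x \<delta>' \<subseteq> weak_nbhd V \<phi> F x \<delta>"
  unfolding weak_nbhd_def by fastforce

lemma centre_in_weak_nbhd: "x \<in> topspace V \<Longrightarrow> \<delta> > 0 \<Longrightarrow> x \<in> weak_nbhd V \<phi> F x \<delta>"
  unfolding weak_nbhd_def by simp

lemma openin_weak_nbhd:
  assumes "finite F" and "\<And>i. i \<in> F \<Longrightarrow> continuous_map V euclideanreal (\<phi> i)"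
  shows "openin V (weak_nbhd V \<phi> F x \<delta>)"
proof -
  have "weak_nbhd V \<phi> F x \<delta> = (\<Inter>i\<in>F. {y \<in> topspace V. \<phi> i y \<in> ball (\<phi> i x) \<delta>}) \<inter> topspace V"
    by (auto simp: weak_nbhd_def dist_real_def abs_minus_commute)
  also have "openin V \<dots>"
    using assms by (intro openin_INT openin_continuous_map_preimage) auto
  finally show ?thesis .
qed

lemma weak_nbhd_base_generated:
  assumes V: "V = topology_generated_by B"
    and B: "\<And>S x. S \<in> B \<Longrightarrow> x \<in> S \<Longrightarrow>
              \<exists>F \<delta>. finite F \<and> F \<subseteq> I \<and> \<delta> > 0 \<and> weak_nbhd V \<phi> F x \<delta> \<subseteq> S"
  shows "weak_nbhd_base V I \<phi>"
  unfolding weak_nbhd_base_def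
proof (intro allI impI)
  fix U x assume "openin V U" "x \<in> U"
  then have "generate_topology_on B U"
    by (simp add: V openin_topology_generated_by_iff)
  then show "\<exists>F \<delta>. finite F \<and> F \<subseteq> I \<and> \<delta> > 0 \<and> weak_nbhd V \<phi> F x \<delta> \<subseteq> U"
    using \<open>x \<in> U\<close>
  proof (induction arbitrary: x)
    case (Int a b)
    obtain F1 \<delta>1 where F1: "finite F1" "F1 \<subseteq> I" "\<delta>1 > 0" "weak_nbhd V \<phi> F1 x \<delta>1 \<subseteq> a"
      using Int.IH(1)[OF IntD1[OF Int.prems]] by (elim exE conjE) (rule that)
    obtain F2 \<delta>2 where F2: "finite F2" "F2 \<subseteq> I" "\<delta>2 > 0" "weak_nbhd V \<phi> F2 x \<delta>2 \<subseteq> b"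
      using Int.IH(2)[OF IntD2[OF Int.prems]] by (elim exE conjE) (rule that)
    have "weak_nbhd V \<phi> (F1 \<union> F2) x (min \<delta>1 \<delta>2) \<subseteq> weak_nbhd V \<phi> F1 x \<delta>1"
         "weak_nbhd V \<phi> (F1 \<union> F2) x (min \<delta>1 \<delta>2) \<subseteq> weak_nbhd V \<phi> F2 x \<delta>2"
      by (rule weak_nbhd_antimono; simp)+
    then have "weak_nbhd V \<phi> (F1 \<union> F2) x (min \<delta>1 \<delta>2) \<subseteq> a \<inter> b"
      using F1(4) F2(4) by blast
    then show ?case
      using F1 F2 by (intro exI[of _ "F1 \<union> F2"] exI[of _ "min \<delta>1 \<delta>2"]) auto
  next
    case (UN Ks)
    then obtain k where k: "k \<in> Ks" "x \<in> k"
      by blast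
    then obtain F \<delta> where "finite F" "F \<subseteq> I" "\<delta> > 0" "weak_nbhd V \<phi> F x \<delta> \<subseteq> k"
      using UN.IH[OF k] by (elim exE conjE) (rule that)
    then show ?case
      using k(1) by (intro exI[of _ F] exI[of _ \<delta>]) auto
  next
    case (Basis s)
    then show ?case
      by (rule B)
  qed simp
qed

lemma weak_nbhd_baseD:
  assumes "weak_nbhd_base V I \<phi>" "openin V U" "x \<in> U"
  obtains F \<delta> where "finite F" "F \<subseteq> I" "\<delta> > 0" "weak_nbhd V \<phi> F x \<delta> \<subseteq> U"
  using assms(1)[unfolded weak_nbhd_base_def, rule_format, OF assms(2,3)]
  by (elim exE conjE) (rule that)

lemma weak_nbhd_base_preimage_ball:
  assumes base: "weak_nbhd_base V I \<phi>" and f: "continuous_map V euclideanreal f"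
    and "x \<in> topspace V" "e > 0"
  shows "\<exists>F \<delta>. finite F \<and> F \<subseteq> I \<and> \<delta> > 0 \<and>
           weak_nbhd V \<phi> F x \<delta> \<subseteq> {y \<in> topspace V. f y \<in> ball (f x) e}"
proof -
  have "openin V {y \<in> topspace V. f y \<in> ball (f x) e}"
    by (rule openin_continuous_map_preimage[OF f]) simp
  moreover have "x \<in> {y \<in> topspace V. f y \<in> ball (f x) e}"
    using assms(3,4) by simp
  ultimately show ?thesis
    by (rule weak_nbhd_baseD[OF base]) (intro exI conjI)
qed

lemma weak_nbhd_base_approx_finite:
  assumes V: "compact_space V" and base: "weak_nbhd_base V I \<phi>"
    and \<phi>: "\<And>i. i \<in> I \<Longrightarrow> continuous_map V euclideanreal (\<phi> i)"
    and f: "continuous_map V euclideanreal f" and "e > 0"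
  obtains J where "finite J" "J \<subseteq> I"
    "\<And>x y. x \<in> topspace V \<Longrightarrow> y \<in> topspace V \<Longrightarrow> \<forall>i\<in>J. \<phi> i x = \<phi> i y \<Longrightarrow> \<bar>f x - f y\<bar> < 2 * e"
proof -
  have "\<exists>F \<delta>. finite F \<and> F \<subseteq> I \<and> \<delta> > 0 \<and>
          weak_nbhd V \<phi> F x \<delta> \<subseteq> {y \<in> topspace V. f y \<in> ball (f x) e}"
    if "x \<in> topspace V" for x
    by (rule weak_nbhd_base_preimage_ball[OF base f that \<open>e > 0\<close>])
  then obtain F \<delta> where F: "\<And>x. x \<in> topspace V \<Longrightarrow> finite (F x) \<and> F x \<subseteq> I \<and> \<delta> x > 0 \<and>
      weak_nbhd V \<phi> (F x) x (\<delta> x) \<subseteq> {y \<in> topspace V. f y \<in> ball (f x) e}"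
    by metis
  define N where "N x = weak_nbhd V \<phi> (F x) x (\<delta> x)" for x
  have "compactin V (topspace V)"
    using V compact_space_def by blast
  moreover have "openin V U" if "U \<in> N ` topspace V" for U
    using that F \<phi> unfolding N_def by (auto intro!: openin_weak_nbhd)
  moreover have "topspace V \<subseteq> \<Union>(N ` topspace V)"
  proof
    fix x assume x: "x \<in> topspace V"
    then have "x \<in> N x"
      unfolding N_def using F by (simp add: centre_in_weak_nbhd)
    then show "x \<in> \<Union>(N ` topspace V)"
      using x by blast
  qed
  ultimately have "\<exists>\<F>. finite \<F> \<and> \<F> \<subseteq> N ` topspace V \<and> topspace V \<subseteq> \<Union>\<F>"
    by (rule compactinD)
  then obtain T where T: "finite T" "T \<subseteq> topspace V" "topspace V \<subseteq> \<Union>(N ` T)"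
    by (metis finite_subset_image)
  have FT: "finite (F z) \<and> F z \<subseteq> I" if "z \<in> T" for z
    using F T(2) that by blast
  show ?thesis
  proof
    show "finite (\<Union>(F ` T))" "\<Union>(F ` T) \<subseteq> I"
      using T(1) FT by auto
  next
    fix x y assume x: "x \<in> topspace V" and y: "y \<in> topspace V"
      and agree: "\<forall>i\<in>\<Union>(F ` T). \<phi> i x = \<phi> i y"
    then obtain z where z: "z \<in> T" "x \<in> N z"
      using T(3) by blast
    then have "y \<in> N z"
      using y agree unfolding N_def weak_nbhd_def by auto
    with z have "f x \<in> ball (f z) e" "f y \<in> ball (f z) e"
      using F T(2) unfolding N_def by blast+
    then show "\<bar>f x - f y\<bar> < 2 * e"
      by (simp add: dist_real_def abs_diff_less_iff)
  qed
qed

lemma weak_nbhd_base_determine_countable: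
  assumes V: "compact_space V" and base: "weak_nbhd_base V I \<phi>"
    and \<phi>: "\<And>i. i \<in> I \<Longrightarrow> continuous_map V euclideanreal (\<phi> i)"
    and f: "continuous_map V euclideanreal f"
  obtains J where "countable J" "J \<subseteq> I"
    "\<And>x y. x \<in> topspace V \<Longrightarrow> y \<in> topspace V \<Longrightarrow> \<forall>i\<in>J. \<phi> i x = \<phi> i y \<Longrightarrow> f x = f y"
proof -
  have "\<exists>J. finite J \<and> J \<subseteq> I \<and> (\<forall>x\<in>topspace V. \<forall>y\<in>topspace V.
          (\<forall>i\<in>J. \<phi> i x = \<phi> i y) \<longrightarrow> \<bar>f x - f y\<bar> < 2 * inverse (Suc n))" for n :: nat
    by (rule weak_nbhd_base_approx_finite[OF V base \<phi> f, of "inverse (Suc n)"]) auto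
  then obtain J where J: "\<And>n. finite (J n) \<and> J n \<subseteq> I \<and> (\<forall>x\<in>topspace V. \<forall>y\<in>topspace V.
          (\<forall>i\<in>J n. \<phi> i x = \<phi> i y) \<longrightarrow> \<bar>f x - f y\<bar> < 2 * inverse (Suc n))"
    by metis
  show ?thesis
  proof
    show "countable (\<Union>n. J n)" "(\<Union>n. J n) \<subseteq> I"
      using J by (auto simp: countable_finite)
  next
    fix x y assume x: "x \<in> topspace V" and y: "y \<in> topspace V"
      and agree: "\<forall>i\<in>(\<Union>n. J n). \<phi> i x = \<phi> i y"
    have "\<bar>f x - f y\<bar> < 2 * inverse (Suc n)" for n
      using J x y agree by blast
    then have "\<bar>f x - f y\<bar> / 2 < inverse (Suc n)" for n
      by (simp add: field_simps)
    then have "\<not> \<bar>f x - f y\<bar> / 2 > 0"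
      using reals_Archimedean by (metis less_asym)
    then show "f x = f y"
      by simp
  qed
qed

subsection \<open>The Vietoris topology is generated by the functionals \<open>K \<mapsto> \<Box>(h[K])\<close>\<close>

lemma box_subset_one: "A \<subseteq> {1} \<Longrightarrow> box A = 1"
  unfolding subset_singleton_iff box_def by auto

lemma vietoris_subset_weak_nbhd:
  assumes Z: "compact_space Z" "normal_space Z"
    and W: "openin Z W" and K: "closedin Z K" "K \<subseteq> W"
  obtains f where "continuous_map Z (top_of_set {0..1}) f"
    "weak_nbhd (vietoris Z) (\<lambda>h K. box (h ` K)) {f} K (1/2) \<subseteq> {L. closedin Z L \<and> L \<subseteq> W}"
proof -
  have "closedin Z (topspace Z - W)"
    using W by blast
  moreover have "disjnt (topspace Z - W) K"
    using K(2) by (auto simp: disjnt_def)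
  ultimately obtain f :: "_ \<Rightarrow> real" where f: "continuous_map Z (top_of_set {0..1}) f"
    "f ` (topspace Z - W) \<subseteq> {0}" "f ` K \<subseteq> {1}"
    using Urysohn_lemma[OF Z(2) _ K(1) _ zero_le_one] by blast
  have "L \<subseteq> W" if L: "closedin Z L" "\<bar>box (f ` L) - box (f ` K)\<bar> < 1/2" for L
  proof -
    have "1/2 < box (f ` L)"
      using L(2) box_subset_one[OF f(3)] by linarith
    moreover have "(1/2 :: real) < 1"
      by simp
    ultimately have "L \<subseteq> {x \<in> topspace Z. 1/2 < f x}"
      using box_image_gt_iff[OF Z(1) f(1) L(1)] by blast
    then show ?thesis
      using f(2) by fastforce
  qed
  then show ?thesis
    using that[OF f(1)] by (auto simp: weak_nbhd_def topspace_vietoris)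
qed

lemma vietoris_meets_weak_nbhd:
  assumes Z: "compact_space Z" "normal_space Z" "t1_space Z"
    and W: "openin Z W" and K: "closedin Z K" "K \<inter> W \<noteq> {}"
  obtains f where "continuous_map Z (top_of_set {0..1}) f"
    "weak_nbhd (vietoris Z) (\<lambda>h K. box (h ` K)) {f} K (1/2) \<subseteq> {L. closedin Z L \<and> L \<inter> W \<noteq> {}}"
proof -
  obtain x0 where x0: "x0 \<in> K" "x0 \<in> W"
    using K(2) by blast
  then have "x0 \<in> topspace Z"
    using W openin_subset by blast
  then have "closedin Z {x0}"
    by (rule closedin_t1_singleton[OF Z(3)])
  moreover have "closedin Z (topspace Z - W)"
    using W by blast
  moreover have "disjnt {x0} (topspace Z - W)"
    using x0 by (auto simp: disjnt_def)
  ultimately obtain f :: "_ \<Rightarrow> real" where f: "continuous_map Z (top_of_set {0..1}) f"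
    "f ` {x0} \<subseteq> {0}" "f ` (topspace Z - W) \<subseteq> {1}"
    using Urysohn_lemma[OF Z(2) _ _ _ zero_le_one] by blast
  have "box (f ` K) = 0"
    using box_image_le[OF Z(1) f(1) K(1) x0(1)] box_image_in_unit[OF Z(1) f(1) K(1)] f(2)
    by simp
  have "L \<inter> W \<noteq> {}" if L: "closedin Z L" "\<bar>box (f ` L) - box (f ` K)\<bar> < 1/2" for L
  proof -
    have "box (f ` L) < 1/2"
      using L(2) \<open>box (f ` K) = 0\<close> by linarith
    moreover have "(1/2 :: real) \<le> 1"
      by simp
    ultimately have "L \<inter> {x \<in> topspace Z. f x < 1/2} \<noteq> {}"
      using box_image_lt_iff[OF Z(1) f(1) L(1)] by blast
    then show ?thesis
      using f(3) by fastforce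
  qed
  then show ?thesis
    using that[OF f(1)] by (auto simp: weak_nbhd_def topspace_vietoris)
qed

lemma weak_nbhd_base_vietoris:
  assumes Z: "compact_space Z" "Hausdorff_space Z"
  shows "weak_nbhd_base (vietoris Z) {h. continuous_map Z (top_of_set {0..1}) h} (\<lambda>h K. box (h ` K))"
proof (rule weak_nbhd_base_generated[OF vietoris_def])
  have normal: "normal_space Z"
    using Z compact_Hausdorff_or_regular_imp_normal_space by blast
  have t1: "t1_space Z"
    using Z(2) Hausdorff_imp_t1_space by blast
  fix S K
  assume "S \<in> { {K. closedin Z K \<and> K \<subseteq> U} | U. openin Z U }
      \<union> { {K. closedin Z K \<and> K \<inter> U \<noteq> {}} | U. openin Z U }" and "K \<in> S"
  then consider W where "openin Z W" "S = {K. closedin Z K \<and> K \<subseteq> W}" "closedin Z K" "K \<subseteq> W"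
    | W where "openin Z W" "S = {K. closedin Z K \<and> K \<inter> W \<noteq> {}}" "closedin Z K" "K \<inter> W \<noteq> {}"
    by blast
  then show "\<exists>F \<delta>. finite F \<and> F \<subseteq> {h. continuous_map Z (top_of_set {0..1}) h} \<and> \<delta> > 0 \<and>
              weak_nbhd (vietoris Z) (\<lambda>h K. box (h ` K)) F K \<delta> \<subseteq> S"
  proof cases
    case 1
    obtain f where "continuous_map Z (top_of_set {0..1}) f"
      "weak_nbhd (vietoris Z) (\<lambda>h K. box (h ` K)) {f} K (1/2) \<subseteq> {L. closedin Z L \<and> L \<subseteq> W}"
      by (rule vietoris_subset_weak_nbhd[OF Z(1) normal 1(1,3,4)])
    then show ?thesis
      using 1(2) by (intro exI[of _ "{f}"] exI[of _ "1/2"]) auto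
  next
    case 2
    obtain f where "continuous_map Z (top_of_set {0..1}) f"
      "weak_nbhd (vietoris Z) (\<lambda>h K. box (h ` K)) {f} K (1/2) \<subseteq> {L. closedin Z L \<and> L \<inter> W \<noteq> {}}"
      by (rule vietoris_meets_weak_nbhd[OF Z(1) normal t1 2(1,3,4)])
    then show ?thesis
      using 2(2) by (intro exI[of _ "{f}"] exI[of _ "1/2"]) auto
  qed
qed

subsection \<open>Factoring through a map into a Tychonoff space\<close>

lemma continuous_map_factor_through_compact:
  fixes f :: "'a \<Rightarrow> real"
  assumes V: "compact_space V" and T: "Hausdorff_space T" "completely_regular_space T"
    and \<Phi>: "continuous_map V T \<Phi>" and f: "continuous_map V (top_of_set {0..1}) f"
    and fibres: "\<And>x y. x \<in> topspace V \<Longrightarrow> y \<in> topspace V \<Longrightarrow> \<Phi> x = \<Phi> y \<Longrightarrow> f x = f y"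
  shows "\<exists>g. continuous_map T (top_of_set {0..1}) g \<and> (\<forall>x\<in>topspace V. f x = g (\<Phi> x))"
proof -
  define S where "S = \<Phi> ` topspace V"
  have S: "compactin T S"
    unfolding S_def using V \<Phi> compact_space_def image_compactin by blast
  then have topS: "topspace (subtopology T S) = S"
    by (simp add: compactin_subset_topspace inf.absorb2)
  have "continuous_map V (subtopology T S) \<Phi>"
    using \<Phi> by (simp add: continuous_map_in_subtopology S_def)
  then have qm: "quotient_map V (subtopology T S) \<Phi>"
    using V Hausdorff_space_subtopology[OF T(1)] topS
    by (intro continuous_imp_quotient_map) (auto simp: S_def)
  obtain g0 where g0: "continuous_map (subtopology T S) (top_of_set {0..1}) g0"
    "g0 ` topspace (subtopology T S) = f ` topspace V" "\<And>x. x \<in> topspace V \<Longrightarrow> g0 (\<Phi> x) = f x"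
    using quotient_map_lift_exists[OF qm f fibres] by blast
  have g0': "continuous_map (subtopology T S) euclideanreal g0" "g0 ` S \<subseteq> {0..1}"
    using g0(1) topS unfolding continuous_map_in_subtopology by (simp_all add: image_subset_iff_funcset)
  have nonempty: "{0..1::real} \<noteq> {}"
    by simp
  obtain g where g: "continuous_map T euclideanreal g" "g ` topspace T \<subseteq> {0..1}"
    "\<And>z. z \<in> S \<Longrightarrow> g z = g0 z"
    by (rule Tietze_extension_completely_regular[OF T(2) S is_interval_cc nonempty g0']) blast
  show ?thesis
  proof (intro exI conjI ballI)
    show "continuous_map T (top_of_set {0..1}) g"
      using g(1,2) by (simp add: continuous_map_in_subtopology image_subset_iff_funcset)
    show "f x = g (\<Phi> x)" if "x \<in> topspace V" for x
      using that g(3) g0(3) by (simp add: S_def)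
  qed
qed

lemma vietoris_determined_by_box_sequence:
  assumes Z: "compact_space Z" "Hausdorff_space Z"
    and f: "continuous_map (vietoris Z) euclideanreal f"
  shows "\<exists>h :: nat \<Rightarrow> 'a \<Rightarrow> real. (\<forall>y. continuous_map Z (top_of_set {0..1}) (h y)) \<and>
           (\<forall>K\<in>topspace (vietoris Z). \<forall>L\<in>topspace (vietoris Z).
              (\<forall>y. box (h y ` K) = box (h y ` L)) \<longrightarrow> f K = f L)"
proof -
  have box_cont: "continuous_map (vietoris Z) euclideanreal (\<lambda>K. box (g ` K))"
    if "g \<in> {g. continuous_map Z (top_of_set {0..1}) g}" for g
    using continuous_map_vietoris_box[OF Z(1)] that continuous_map_in_subtopology by blast
  obtain J where J: "countable J" "J \<subseteq> {g. continuous_map Z (top_of_set {0..1}) g}"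
    "\<And>K L. K \<in> topspace (vietoris Z) \<Longrightarrow> L \<in> topspace (vietoris Z) \<Longrightarrow>
        \<forall>g\<in>J. box (g ` K) = box (g ` L) \<Longrightarrow> f K = f L"
    using weak_nbhd_base_determine_countable[OF compact_space_vietoris[OF Z(1)]
        weak_nbhd_base_vietoris[OF Z] box_cont f] by metis
  \<comment> \<open>Adding a constant makes the family nonempty, so that it can be enumerated by \<open>\<nat>\<close>.\<close>
  define h where "h = from_nat_into (insert (\<lambda>_. 0) J)"
  have range_h: "range h = insert (\<lambda>_. 0) J"
    using J(1) by (simp add: h_def)
  show ?thesis
  proof (intro exI[of _ h] conjI allI ballI impI)
    fix y
    have "h y \<in> insert (\<lambda>_. 0) J"
      using range_h by blast
    then show "continuous_map Z (top_of_set {0..1}) (h y)"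
      using J(2) by (auto simp: continuous_map_const)
  next
    fix K L assume "K \<in> topspace (vietoris Z)" "L \<in> topspace (vietoris Z)"
      and "\<forall>y. box (h y ` K) = box (h y ` L)"
    then show "f K = f L"
      using J(3) range_h by (metis insertCI rangeE)
  qed
qed

lemma compact_space_cube: "compact_space (cube X)"
  unfolding cube_def by (simp add: compact_space_product_topology compact_space_subtopology)

lemma Hausdorff_space_cube: "Hausdorff_space (cube X)"
  unfolding cube_def by (simp add: Hausdorff_space_product_topology Hausdorff_space_subtopology)

lemma completely_regular_space_cube: "completely_regular_space (cube X)"
  using compact_space_cube Hausdorff_space_cube
  by (blast intro: normal_imp_completely_regular_space compact_Hausdorff_or_regular_imp_normal_space)

lemma vietoris_continuous_map_factorization:
  fixes f :: "'a set \<Rightarrow> real"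
  assumes Z: "compact_space Z" "Hausdorff_space Z"
    and f: "continuous_map (vietoris Z) (top_of_set {0..1}) f"
  shows "\<exists>(h :: nat \<Rightarrow> 'a \<Rightarrow> real) s. (\<forall>y. continuous_map Z (top_of_set {0..1}) (h y)) \<and>
           continuous_map (cube UNIV) (top_of_set {0..1}) s \<and>
           (\<forall>K\<in>topspace (vietoris Z). f K = s (\<lambda>y. box (h y ` K)))"
proof -
  have "continuous_map (vietoris Z) euclideanreal f"
    using f continuous_map_in_subtopology by blast
  then obtain h :: "nat \<Rightarrow> 'a \<Rightarrow> real"
    where h: "\<forall>y. continuous_map Z (top_of_set {0..1}) (h y)"
      and fibres: "\<forall>K\<in>topspace (vietoris Z). \<forall>L\<in>topspace (vietoris Z).
                     (\<forall>y. box (h y ` K) = box (h y ` L)) \<longrightarrow> f K = f L"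
    using vietoris_determined_by_box_sequence[OF Z] by blast
  define \<Phi> where "\<Phi> K = (\<lambda>y. box (h y ` K))" for K
  have "continuous_map (vietoris Z) (cube UNIV) \<Phi>"
    unfolding cube_def continuous_map_componentwise_UNIV \<Phi>_def
    using continuous_map_vietoris_box[OF Z(1)] h by simp
  moreover have "f K = f L"
    if "K \<in> topspace (vietoris Z)" "L \<in> topspace (vietoris Z)" "\<Phi> K = \<Phi> L" for K L
  proof -
    have "\<forall>y. box (h y ` K) = box (h y ` L)"
      using that(3) by (simp add: \<Phi>_def fun_eq_iff)
    then show ?thesis
      using fibres that(1,2) by blast
  qed
  ultimately have "\<exists>s. continuous_map (cube UNIV) (top_of_set {0..1}) s \<and>
                     (\<forall>K\<in>topspace (vietoris Z). f K = s (\<Phi> K))"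
    using continuous_map_factor_through_compact[OF compact_space_vietoris[OF Z(1)]
        Hausdorff_space_cube completely_regular_space_cube _ f] by blast
  then show ?thesis
    using h unfolding \<Phi>_def by blast
qed

theorem theorem5p10:
  fixes X :: "'x set"
    and f :: "('x \<Rightarrow> real) set \<Rightarrow> real"
  assumes "continuous_map (vietoris (cube X)) (top_of_set {0..1}) f"
  shows "\<exists>(Y :: nat set) (s :: (nat \<Rightarrow> real) \<Rightarrow> real) (h :: nat \<Rightarrow> ('x \<Rightarrow> real) \<Rightarrow> real).
           countable Y
         \<and> continuous_map (cube Y) (top_of_set {0..1}) s
         \<and> (\<forall>y\<in>Y. continuous_map (cube X) (top_of_set {0..1}) (h y))
         \<and> (\<forall>K\<in>topspace (vietoris (cube X)). f K = s (\<lambda>y\<in>Y. box (h y ` K)))"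
  using vietoris_continuous_map_factorization[OF compact_space_cube Hausdorff_space_cube assms]
proof (elim exE conjE)
  fix h :: "nat \<Rightarrow> ('x \<Rightarrow> real) \<Rightarrow> real" and s :: "(nat \<Rightarrow> real) \<Rightarrow> real"
  assume factorization: "\<forall>y. continuous_map (cube X) (top_of_set {0..1}) (h y)"
    "continuous_map (cube UNIV) (top_of_set {0..1}) s"
    "\<forall>K\<in>topspace (vietoris (cube X)). f K = s (\<lambda>y. box (h y ` K))"
  show ?thesis
    by (intro exI[of _ UNIV] exI[of _ s] exI[of _ h]) (simp add: factorization restrict_UNIV)
qed

end
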